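(* For all $\mathbf u\in\{0,1\}^{\mathbb N}$: $\inf(L(\mathbf u))=L(\inf(\mathbf u))$, $\inf(R(\mathbf u))=R(\inf(\mathbf u))$, and $0\,\sup(L(\mathbf u))=L(\sup(\mathbf u))$. If $\inf(\mathbf u)=\inf_1(\mathbf u)$, then $\inf(M(\mathbf u))=0\,M(\inf(\mathbf u))$. If $\sup(\mathbf u)=\sup_0(\mathbf u)$, then $\sup(R(\mathbf u))=1\,R(\sup(\mathbf u))$ and $\sup(M(\mathbf u))=1\,M(\sup(\mathbf u))$. Moreover: (a) For each $\sigma\in\{L,M,R\}^*$ there is a suffix $w$ of $\sigma(1)$ such that $\inf_1(\sigma(\mathbf u))=\inf(\sigma(\mathbf u))=w\,\sigma(\inf(\mathbf u))$ for all $\mathbf u\in\{0,1\}^{\mathbb N}$ with $\inf(\mathbf u)=\inf_1(\mathbf u)$. (b) For each $\sigma\in\{L,M,R\}^*M\cup\{L,M,R\}^*R$ there is a suffix $w$ of $\sigma(0)$ such that $\sup_0(\sigma(\mathbf u))=\sup(\sigma(\mathbf u))=w\,\sigma(\sup(\mathbf u))$ for all $\mathbf u\in\{0,1\}^{\mathbb N}$ with $\sup(\mathbf u)=\sup_0(\mathbf u)$. (c) For each $\sigma\in\{L,M,R\}^*L$ there is a prefix $w$ of $\sigma(\overline0)$ such that $w\,\sup_0(\sigma(\mathbf u))=w\,\sup(\sigma(\mathbf u))=\sigma(\sup(\mathbf u))$ for all $\mathbf u\in\{0,1\}^{\mathbb N}$ with $\sup(\mathbf u)=\sup_0(\mathbf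 u)$.
   Context: Infinite words over $\{0,1\}$ are ordered lexicographically; $\overline{w}$ denotes infinite repetition of $w$. For $\mathbf u=u_1u_2\cdots\in\{0,1\}^{\mathbb N}$, $\sup(\mathbf u)$ and $\inf(\mathbf u)$ are the lexicographic supremum and infimum of $\{u_ku_{k+1}\cdots:k\ge1\}$, $\inf_1(\mathbf u)=\inf\{u_{k+1}u_{k+2}\cdots:k\ge1,\ u_k=1\}$ and $\sup_0(\mathbf u)=\sup\{u_{k+1}u_{k+2}\cdots:k\ge1,\ u_k=0\}$. The substitutions (monoid morphisms on words, extended letterwise to infinite words) are $L:0\mapsto0,1\mapsto01$; $M:0\mapsto01,1\mapsto10$; $R:0\mapsto01,1\mapsto1$. $\{L,M,R\}^*$ is the monoid generated by them under composition (including the identity); $\{L,M,R\}^*X=\{\tau X:\tau\in\{L,M,R\}^*\}$ for $X\in\{L,M,R\}$. *)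

theory Defs
  imports Main "HOL-Library.Sublist"
begin

text \<open>Infinite binary words are functions nat => bool, with False = letter 0 and
  True = letter 1; positions are 0-indexed.  Finite words are bool lists.\<close>

type_synonym iword = "nat \<Rightarrow> bool"

definition lex_less :: "iword \<Rightarrow> iword \<Rightarrow> bool" where
  "lex_less u v \<longleftrightarrow> (\<exists>n. (\<forall>i<n. u i = v i) \<and> \<not> u n \<and> v n)"

definition lex_le :: "iword \<Rightarrow> iword \<Rightarrow> bool" where
  "lex_le u v \<longleftrightarrow> u = v \<or> lex_less u v"

definition lex_sup :: "iword set \<Rightarrow> iword" where
  "lex_sup S = (THE s. (\<forall>x\<in>S. lex_le x s) \<and> (\<forall>t. (\<forall>x\<in>S. lex_le x t) \<longrightarrow> lex_le s t))"

definition lex_inf :: "iword set \<Rightarrow> iword" where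
  "lex_inf S = (THE s. (\<forall>x\<in>S. lex_le s x) \<and> (\<forall>t. (\<forall>x\<in>S. lex_le t x) \<longrightarrow> lex_le t s))"

text \<open>shift k u = u_{k+1} u_{k+2} ... in 1-indexed notation.\<close>
definition shift :: "nat \<Rightarrow> iword \<Rightarrow> iword" where
  "shift k u = (\<lambda>i. u (i + k))"

definition wsup :: "iword \<Rightarrow> iword" where
  "wsup u = lex_sup {shift k u | k. True}"

definition winf :: "iword \<Rightarrow> iword" where
  "winf u = lex_inf {shift k u | k. True}"

definition winf1 :: "iword \<Rightarrow> iword" where
  "winf1 u = lex_inf {shift (Suc k) u | k. u k}"

definition wsup0 :: "iword \<Rightarrow> iword" where
  "wsup0 u = lex_sup {shift (Suc k) u | k. \<not> u k}"

datatype sub = SL | SM | SR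

fun img :: "sub \<Rightarrow> bool \<Rightarrow> bool list" where
  "img SL False = [False]"
| "img SL True = [False, True]"
| "img SM False = [False, True]"
| "img SM True = [True, False]"
| "img SR False = [False, True]"
| "img SR True = [True]"

text \<open>The substitution X1 o X2 o ... o Xk represented by the list [X1,...,Xk]
  (the empty list is the identity); its image of a letter.\<close>
fun morph :: "sub list \<Rightarrow> bool \<Rightarrow> bool list" where
  "morph [] a = [a]"
| "morph (X # xs) a = concat (map (img X) (morph xs a))"

text \<open>Extension of a letter-to-word morphism with nonempty images to infinite words.\<close>
definition apply_inf :: "(bool \<Rightarrow> bool list) \<Rightarrow> iword \<Rightarrow> iword" where
  "apply_inf \<phi> u n = concat (map (\<phi> \<circ> u) [0..<Suc n]) ! n"

definition subst :: "sub list \<Rightarrow> iword \<Rightarrow> iword" where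
  "subst \<sigma> u = apply_inf (morph \<sigma>) u"

definition prep :: "bool list \<Rightarrow> iword \<Rightarrow> iword" where
  "prep w u = (\<lambda>n. if n < length w then w ! n else u (n - length w))"

end

theory Submission
  imports Defs
begin

(* Suprema and infima of sets of words are characterised as bounds that elements of the set
   approximate, i.e. agree with on arbitrarily long prefixes; nonempty sets have them by a greedy
   letter-by-letter construction.  Each X in {L, M, R} is order-preserving, and a suffix of X(u)
   is either X(v) for a suffix v of u, or b X(v) inside a two-letter block X(a) = a'b.  Comparing
   both kinds with the candidate bound, and approximating it by images of suffixes that approximate
   inf u (resp. sup u), gives the one-step formulas.  The hypotheses inf u = inf_1 u and
   sup u = sup_0 u provide approximating suffixes right after a letter 1 (resp. 0); the image of
   that letter ends with a known tail, and the hypothesis is inherited by X(u).  Parts (a)-(c)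
   then follow by induction on the substitution, peeling off its last factor. *)

section \<open>Lexicographic order\<close>

lemma lex_less_trans: "lex_less x y \<Longrightarrow> lex_less y z \<Longrightarrow> lex_less x z"
  unfolding lex_less_def
proof (elim exE conjE)
  fix n m
  assume xy: "\<forall>i<n. x i = y i" "\<not> x n" "y n" and yz: "\<forall>i<m. y i = z i" "\<not> y m" "z m"
  have "n \<noteq> m" using xy yz by auto
  then show "\<exists>n. (\<forall>i<n. x i = z i) \<and> \<not> x n \<and> z n"
    using xy yz by (intro exI[of _ "min n m"]) (auto simp: min_def)
qed

lemma lex_less_total: "x \<noteq> y \<Longrightarrow> lex_less x y \<or> lex_less y x"
proof -
  assume "x \<noteq> y"
  then have "\<exists>i. x i \<noteq> y i" by auto
  define n where "n = (LEAST i. x i \<noteq> y i)"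
  have "x n \<noteq> y n" "\<forall>i<n. x i = y i"
    unfolding n_def using LeastI_ex[OF \<open>\<exists>i. x i \<noteq> y i\<close>] not_less_Least by blast+
  then show ?thesis unfolding lex_less_def by (cases "y n") auto
qed

lemma lex_less_irrefl: "\<not> lex_less x x"
  by (auto simp: lex_less_def)

lemma lex_le_refl: "lex_le x x"
  by (simp add: lex_le_def)

lemma lex_le_trans: "lex_le x y \<Longrightarrow> lex_le y z \<Longrightarrow> lex_le x z"
  unfolding lex_le_def using lex_less_trans by blast

lemma lex_le_less_trans: "lex_le x y \<Longrightarrow> lex_less y z \<Longrightarrow> lex_less x z"
  unfolding lex_le_def using lex_less_trans by blast

lemma lex_le_antisym: "lex_le x y \<Longrightarrow> lex_le y x \<Longrightarrow> x = y"
  unfolding lex_le_def using lex_less_trans lex_less_irrefl by blast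

lemma lex_not_le: "\<not> lex_le x y \<Longrightarrow> lex_less y x"
  unfolding lex_le_def using lex_less_total by blast

lemma lex_le_total: "lex_le x y \<or> lex_le y x"
  using lex_not_le lex_le_def by blast

lemma lex_less_first: "\<not> x 0 \<Longrightarrow> y 0 \<Longrightarrow> lex_less x y"
  unfolding lex_less_def by (intro exI[of _ 0]) auto

lemma lex_le_first: "\<not> x 0 \<Longrightarrow> y 0 \<Longrightarrow> lex_le x y"
  using lex_less_first lex_le_def by blast

lemma lex_le_first_False: "lex_le x y \<Longrightarrow> \<not> y 0 \<Longrightarrow> \<not> x 0"
  using lex_less_first lex_le_less_trans lex_less_irrefl by blast

lemma lex_le_zero_iff: "lex_le x (\<lambda>_. False) \<longleftrightarrow> x = (\<lambda>_. False)"
  unfolding lex_le_def lex_less_def by auto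

lemma lex_one_le_iff: "lex_le (\<lambda>_. True) x \<longleftrightarrow> x = (\<lambda>_. True)"
  unfolding lex_le_def lex_less_def by auto

lemma lex_zero_le: "lex_le (\<lambda>_. False) x"
  using lex_le_total[of x] lex_le_zero_iff by metis

lemma lex_le_one: "lex_le x (\<lambda>_. True)"
  using lex_le_total[of x] lex_one_le_iff by metis

lemma prep_Nil [simp]: "prep [] x = x"
  by (simp add: prep_def)

lemma prep_append: "prep (v @ w) x = prep v (prep w x)"
  by (auto simp: prep_def nth_append fun_eq_iff)

lemma shift_apply [simp]: "shift k u i = u (i + k)"
  by (simp add: shift_def)

lemma shift_0 [simp]: "shift 0 u = u"
  by (simp add: shift_def)

lemma shift_shift: "shift a (shift b u) = shift (a + b) u"
  by (simp add: shift_def add.assoc)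

lemma shift_prep: "r \<le> length w \<Longrightarrow> shift r (prep w x) = prep (drop r w) x"
  unfolding prep_def by (rule ext) (auto simp: add.commute)

lemma shift_prep_length [simp]: "shift (length w) (prep w x) = x"
  by (auto simp: prep_def fun_eq_iff)

lemma prep_inj: "prep w x = prep w y \<Longrightarrow> x = y"
  by (metis shift_prep_length)

lemma shift_unfold: "shift k u = prep [u k] (shift (Suc k) u)"
  by (auto simp: prep_def fun_eq_iff)

lemma prep_less_iff [simp]: "lex_less (prep w x) (prep w y) \<longleftrightarrow> lex_less x y"
proof
  assume "lex_less (prep w x) (prep w y)"
  then obtain n where n: "\<forall>i<n. prep w x i = prep w y i" "\<not> prep w x n" "prep w y n"
    unfolding lex_less_def by blast
  then have "length w \<le> n"
    by (metis not_le prep_def)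
  have "x i = y i" if "i < n - length w" for i
    using n(1) that spec[OF n(1), of "i + length w"] by (auto simp: prep_def)
  with n \<open>length w \<le> n\<close> show "lex_less x y"
    unfolding lex_less_def prep_def by (intro exI[of _ "n - length w"]) auto
next
  assume "lex_less x y"
  then obtain n where "\<forall>i<n. x i = y i" "\<not> x n" "y n"
    unfolding lex_less_def by blast
  then show "lex_less (prep w x) (prep w y)"
    unfolding lex_less_def prep_def by (intro exI[of _ "n + length w"]) auto
qed

lemma prep_le_iff [simp]: "lex_le (prep w x) (prep w y) \<longleftrightarrow> lex_le x y"
  unfolding lex_le_def by (auto dest: prep_inj)

lemma lex_le_prep_True: "lex_le x (prep [True] x)"
proof (cases "\<forall>i. x i")
  case True
  then have "prep [True] x = x"
    by (simp add: prep_def fun_eq_iff)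
  then show ?thesis
    by (simp add: lex_le_refl)
next
  case False
  then obtain k where "\<not> x k"
    by blast
  define n where "n = (LEAST i. \<not> x i)"
  have n: "\<not> x n" "\<forall>i<n. x i"
    unfolding n_def using LeastI[of "\<lambda>i. \<not> x i" k] not_less_Least \<open>\<not> x k\<close> by auto
  have "prep [True] x i" if "i \<le> n" for i
    using n(2) that by (cases i) (simp_all add: prep_def)
  with n have "lex_less x (prep [True] x)"
    unfolding lex_less_def by (intro exI[of _ n]) simp
  then show ?thesis
    by (simp add: lex_le_def)
qed

lemma lex_le_prep_False: "lex_le (prep [False] x) x"
proof (cases "\<forall>i. \<not> x i")
  case True
  then have "prep [False] x = x"
    by (simp add: prep_def fun_eq_iff)
  then show ?thesis
    by (simp add: lex_le_refl)
next
  case False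
  then obtain k where "x k"
    by blast
  define n where "n = (LEAST i. x i)"
  have n: "x n" "\<forall>i<n. \<not> x i"
    unfolding n_def using LeastI[of x k] not_less_Least \<open>x k\<close> by auto
  have "\<not> prep [False] x i" if "i \<le> n" for i
    using n(2) that by (cases i) (simp_all add: prep_def)
  with n have "lex_less (prep [False] x) x"
    unfolding lex_less_def by (intro exI[of _ n]) simp
  then show ?thesis
    by (simp add: lex_le_def)
qed

section \<open>Approximation and suprema of sets of words\<close>

definition agree :: "nat \<Rightarrow> iword \<Rightarrow> iword \<Rightarrow> bool" where
  "agree n x y \<longleftrightarrow> (\<forall>i<n. x i = y i)"

lemma agree_prep: "agree n x y \<Longrightarrow> agree n (prep w x) (prep w y)"
  by (auto simp: agree_def prep_def)

lemma agree_SucD: "agree (Suc n) x y \<Longrightarrow> x 0 = y 0 \<and> agree n (shift 1 x) (shift 1 y)"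
  by (auto simp: agree_def)

lemma agree_iff_map: "agree n x y \<longleftrightarrow> map x [0..<n] = map y [0..<n]"
  by (auto simp: agree_def)

lemma lex_less_agree_right:
  assumes "lex_less t c"
  shows "\<exists>n. \<forall>x. agree n x c \<longrightarrow> lex_less t x"
proof -
  from assms obtain n where "\<forall>i<n. t i = c i" "\<not> t n" "c n"
    unfolding lex_less_def by blast
  then have "lex_less t x" if "agree (Suc n) x c" for x
    using that unfolding lex_less_def agree_def by (intro exI[of _ n]) auto
  then show ?thesis by blast
qed

lemma lex_less_agree_left:
  assumes "lex_less c t"
  shows "\<exists>n. \<forall>x. agree n x c \<longrightarrow> lex_less x t"
proof -
  from assms obtain n where "\<forall>i<n. c i = t i" "\<not> c n" "t n"
    unfolding lex_less_def by blast
  then have "lex_less x t" if "agree (Suc n) x c" for x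
    using that unfolding lex_less_def agree_def by (intro exI[of _ n]) auto
  then show ?thesis by blast
qed

lemma lex_sup_eqI:
  assumes upper: "\<forall>x\<in>S. lex_le x c" and approx: "\<forall>n. \<exists>x\<in>S. agree n x c"
  shows "lex_sup S = c"
proof -
  have least: "lex_le c t" if "\<forall>x\<in>S. lex_le x t" for t
  proof (rule ccontr)
    assume "\<not> lex_le c t"
    then obtain n where "\<forall>x. agree n x c \<longrightarrow> lex_less t x"
      using lex_not_le lex_less_agree_right by blast
    with approx that show False
      using lex_le_less_trans lex_less_irrefl by blast
  qed
  show ?thesis
    unfolding lex_sup_def by (rule the_equality) (use upper least lex_le_antisym in blast)+
qed

lemma lex_inf_eqI:
  assumes lower: "\<forall>x\<in>S. lex_le c x" and approx: "\<forall>n. \<exists>x\<in>S. agree n x c"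
  shows "lex_inf S = c"
proof -
  have greatest: "lex_le t c" if "\<forall>x\<in>S. lex_le t x" for t
  proof (rule ccontr)
    assume "\<not> lex_le t c"
    then obtain n where "\<forall>x. agree n x c \<longrightarrow> lex_less x t"
      using lex_not_le lex_less_agree_left by blast
    with approx that show False
      using lex_le_less_trans lex_less_irrefl by blast
  qed
  show ?thesis
    unfolding lex_inf_def by (rule the_equality) (use lower greatest lex_le_antisym in blast)+
qed

lemma lex_sup_empty: "lex_sup {} = (\<lambda>_. False)"
  unfolding lex_sup_def
  by (rule the_equality) (use lex_zero_le lex_le_zero_iff in auto)

lemma lex_inf_empty: "lex_inf {} = (\<lambda>_. True)"
  unfolding lex_inf_def
  by (rule the_equality) (use lex_le_one lex_one_le_iff in auto)

(* For b = True this builds the supremum, for b = False the infimum of a nonempty set. *)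

fun greedy_prefix :: "iword set \<Rightarrow> bool \<Rightarrow> nat \<Rightarrow> bool list" where
  "greedy_prefix S b 0 = []"
| "greedy_prefix S b (Suc n) = greedy_prefix S b n @
     [if \<exists>x\<in>S. map x [0..<Suc n] = greedy_prefix S b n @ [b] then b else \<not> b]"

definition greedy :: "iword set \<Rightarrow> bool \<Rightarrow> iword" where
  "greedy S b i = greedy_prefix S b (Suc i) ! i"

lemma length_greedy_prefix [simp]: "length (greedy_prefix S b n) = n"
  by (induction n) auto

lemma take_greedy_prefix: "m \<le> n \<Longrightarrow> take m (greedy_prefix S b n) = greedy_prefix S b m"
proof (induction n)
  case (Suc n)
  show ?case
  proof (cases "m = Suc n")
    case False
    with Suc show ?thesis
      by (simp add: le_Suc_eq)
  qed simp
qed simp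

lemma map_greedy: "map (greedy S b) [0..<n] = greedy_prefix S b n"
proof (rule nth_equalityI)
  fix i assume "i < length (map (greedy S b) [0..<n])"
  then have "greedy_prefix S b (Suc i) = take (Suc i) (greedy_prefix S b n)"
    by (simp add: take_greedy_prefix)
  with \<open>i < _\<close> show "map (greedy S b) [0..<n] ! i = greedy_prefix S b n ! i"
    by (simp add: greedy_def)
qed simp

lemma greedy_prefix_realized: "S \<noteq> {} \<Longrightarrow> \<exists>x\<in>S. map x [0..<n] = greedy_prefix S b n"
proof (induction n)
  case (Suc n)
  then obtain x where "x \<in> S" "map x [0..<n] = greedy_prefix S b n"
    by blast
  then have x: "x \<in> S" "map x [0..<Suc n] = greedy_prefix S b n @ [x n]"
    by simp_all
  show ?case
  proof (cases "\<exists>y\<in>S. map y [0..<Suc n] = greedy_prefix S b n @ [b]")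
    case True
    then show ?thesis
      by (simp only: greedy_prefix.simps if_True)
  next
    case False
    with x have "x n = (\<not> b)"
      by (cases "x n = b") blast+
    with x False show ?thesis
      by (simp only: greedy_prefix.simps if_False) blast
  qed
qed auto

lemma greedy_approx: "S \<noteq> {} \<Longrightarrow> \<exists>x\<in>S. agree n x (greedy S b)"
  using greedy_prefix_realized by (simp add: agree_iff_map map_greedy)

lemma greedy_choice:
  assumes "x \<in> S" "agree n x (greedy S b)" "x n = b"
  shows "greedy S b n = b"
proof -
  have "map x [0..<Suc n] = greedy_prefix S b n @ [b]"
    using assms(2,3) by (simp add: agree_iff_map map_greedy)
  with assms(1) show ?thesis
    by (auto simp: greedy_def nth_append)
qed

lemma greedy_True_upper: "x \<in> S \<Longrightarrow> lex_le x (greedy S True)"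
proof (rule ccontr)
  assume "x \<in> S" and "\<not> lex_le x (greedy S True)"
  from this(2) have "lex_less (greedy S True) x"
    by (rule lex_not_le)
  then obtain n where "agree n x (greedy S True)" "\<not> greedy S True n" "x n"
    by (auto simp: lex_less_def agree_def)
  with \<open>x \<in> S\<close> show False
    using greedy_choice by blast
qed

lemma greedy_False_lower: "x \<in> S \<Longrightarrow> lex_le (greedy S False) x"
proof (rule ccontr)
  assume "x \<in> S" and "\<not> lex_le (greedy S False) x"
  from this(2) have "lex_less x (greedy S False)"
    by (rule lex_not_le)
  then obtain n where "agree n x (greedy S False)" "greedy S False n" "\<not> x n"
    by (auto simp: lex_less_def agree_def)
  with \<open>x \<in> S\<close> show False
    using greedy_choice by blast
qed

lemma lex_sup_greedy: "S \<noteq> {} \<Longrightarrow> lex_sup S = greedy S True"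
  using greedy_True_upper greedy_approx by (intro lex_sup_eqI) auto

lemma lex_inf_greedy: "S \<noteq> {} \<Longrightarrow> lex_inf S = greedy S False"
  using greedy_False_lower greedy_approx by (intro lex_inf_eqI) auto

lemma lex_sup_upper: "x \<in> S \<Longrightarrow> lex_le x (lex_sup S)"
  using lex_sup_greedy[of S] greedy_True_upper[of x S] by (metis empty_iff)

lemma lex_inf_lower: "x \<in> S \<Longrightarrow> lex_le (lex_inf S) x"
  using lex_inf_greedy[of S] greedy_False_lower[of x S] by (metis empty_iff)

lemma lex_sup_approx: "S \<noteq> {} \<Longrightarrow> \<exists>x\<in>S. agree n x (lex_sup S)"
  using lex_sup_greedy[of S] greedy_approx[of S n True] by simp

lemma lex_inf_approx: "S \<noteq> {} \<Longrightarrow> \<exists>x\<in>S. agree n x (lex_inf S)"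
  using lex_inf_greedy[of S] greedy_approx[of S n False] by simp

lemma shift_le_wsup: "lex_le (shift k u) (wsup u)"
  unfolding wsup_def by (blast intro: lex_sup_upper)

lemma winf_le_shift: "lex_le (winf u) (shift k u)"
  unfolding winf_def by (blast intro: lex_inf_lower)

lemma winf1_le_shift: "u k \<Longrightarrow> lex_le (winf1 u) (shift (Suc k) u)"
  unfolding winf1_def by (blast intro: lex_inf_lower)

lemma wsup_approx: "\<exists>k. agree n (shift k u) (wsup u)"
  using lex_sup_approx[of "{shift k u | k. True}"] unfolding wsup_def by blast

lemma winf_approx: "\<exists>k. agree n (shift k u) (winf u)"
  using lex_inf_approx[of "{shift k u | k. True}"] unfolding winf_def by blast

lemma wsup0_approx:
  assumes "wsup u = wsup0 u"
  shows "\<exists>k. \<not> u k \<and> agree n (shift (Suc k) u) (wsup u)"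
proof (cases "\<exists>k. \<not> u k")
  case True
  then have "{shift (Suc k) u | k. \<not> u k} \<noteq> {}"
    by blast
  from lex_sup_approx[OF this] assms show ?thesis
    unfolding wsup0_def by auto
next
  case False
  then have "u = (\<lambda>_. True)"
    by auto
  then have "wsup u = (\<lambda>_. True)"
    using shift_le_wsup[of 0 u] by (simp add: lex_one_le_iff)
  with assms False show ?thesis
    by (simp add: wsup0_def lex_sup_empty fun_eq_iff)
qed

lemma winf1_approx:
  assumes "winf u = winf1 u"
  shows "\<exists>k. u k \<and> agree n (shift (Suc k) u) (winf u)"
proof (cases "\<exists>k. u k")
  case True
  then have "{shift (Suc k) u | k. u k} \<noteq> {}"
    by blast
  from lex_inf_approx[OF this] assms show ?thesis
    unfolding winf1_def by auto
next
  case False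
  then have "u = (\<lambda>_. False)"
    by auto
  then have "winf u = (\<lambda>_. False)"
    using winf_le_shift[of u 0] by (simp add: lex_le_zero_iff)
  with assms False show ?thesis
    by (simp add: winf1_def lex_inf_empty fun_eq_iff)
qed

lemma wsup_eqI:
  assumes "\<forall>j. lex_le (shift j v) c" "\<forall>n. \<exists>j. agree n (shift j v) c"
  shows "wsup v = c"
  unfolding wsup_def using assms by (intro lex_sup_eqI) blast+

lemma winf_eqI:
  assumes "\<forall>j. lex_le c (shift j v)" "\<forall>n. \<exists>j. agree n (shift j v) c"
  shows "winf v = c"
  unfolding winf_def using assms by (intro lex_inf_eqI) blast+

lemma wsup0_wsup_eqI:
  assumes "\<forall>j. lex_le (shift j v) c" "\<forall>n. \<exists>j. \<not> v j \<and> agree n (shift (Suc j) v) c"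
  shows "wsup0 v = c \<and> wsup v = c"
proof
  show "wsup0 v = c"
    unfolding wsup0_def using assms by (intro lex_sup_eqI) blast+
  show "wsup v = c"
    using assms by (intro wsup_eqI) auto
qed

lemma winf1_winf_eqI:
  assumes "\<forall>j. lex_le c (shift j v)" "\<forall>n. \<exists>j. v j \<and> agree n (shift (Suc j) v) c"
  shows "winf1 v = c \<and> winf v = c"
proof
  show "winf1 v = c"
    unfolding winf1_def using assms by (intro lex_inf_eqI) blast+
  show "winf v = c"
    using assms by (intro winf_eqI) auto
qed

lemma wsup0_wsup_zero: "wsup0 (\<lambda>_. False) = (\<lambda>_. False) \<and> wsup (\<lambda>_. False) = (\<lambda>_. False)"
  by (rule wsup0_wsup_eqI) (simp_all add: shift_def lex_le_refl agree_def)

section \<open>Non-erasing morphisms on infinite words\<close>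

definition nonerasing :: "(bool \<Rightarrow> bool list) \<Rightarrow> bool" where
  "nonerasing \<phi> \<longleftrightarrow> (\<forall>a. \<phi> a \<noteq> [])"

definition image_prefix :: "(bool \<Rightarrow> bool list) \<Rightarrow> iword \<Rightarrow> nat \<Rightarrow> bool list" where
  "image_prefix \<phi> u k = concat (map (\<phi> \<circ> u) [0..<k])"

lemma image_prefix_0 [simp]: "image_prefix \<phi> u 0 = []"
  by (simp add: image_prefix_def)

lemma image_prefix_Suc: "image_prefix \<phi> u (Suc k) = image_prefix \<phi> u k @ \<phi> (u k)"
  by (simp add: image_prefix_def)

lemma image_prefix_add: "image_prefix \<phi> u (k + j) = image_prefix \<phi> u k @ image_prefix \<phi> (shift k u) j"
  by (induction j) (simp_all add: image_prefix_Suc add.commute)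

lemma length_image_prefix_ge: "nonerasing \<phi> \<Longrightarrow> k \<le> length (image_prefix \<phi> u k)"
proof (induction k)
  case (Suc k)
  then have "1 \<le> length (\<phi> (u k))"
    by (simp add: nonerasing_def Suc_le_eq)
  with Suc show ?case
    by (simp add: image_prefix_Suc)
qed simp

lemma image_prefix_cong: "agree k u v \<Longrightarrow> image_prefix \<phi> u k = image_prefix \<phi> v k"
  unfolding image_prefix_def agree_def by (intro arg_cong[where f = concat] map_cong) auto

lemma apply_inf_nth_image_prefix:
  assumes ne: "nonerasing \<phi>" and n: "n < length (image_prefix \<phi> u k)"
  shows "apply_inf \<phi> u n = image_prefix \<phi> u k ! n"
proof -
  have len: "n < length (image_prefix \<phi> u (Suc n))"
    using length_image_prefix_ge[OF ne, of "Suc n" u] by simp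
  have "apply_inf \<phi> u n = image_prefix \<phi> u (Suc n) ! n"
    by (simp add: apply_inf_def image_prefix_def)
  also have "\<dots> = image_prefix \<phi> u k ! n"
  proof (cases "k \<le> Suc n")
    case True
    then show ?thesis
      using image_prefix_add[of \<phi> u k "Suc n - k"] n by (simp add: nth_append)
  next
    case False
    then show ?thesis
      using image_prefix_add[of \<phi> u "Suc n" "k - Suc n"] len by (simp add: nth_append)
  qed
  finally show ?thesis .
qed

lemma apply_inf_split:
  assumes ne: "nonerasing \<phi>"
  shows "apply_inf \<phi> u = prep (image_prefix \<phi> u k) (apply_inf \<phi> (shift k u))"
proof
  fix n
  show "apply_inf \<phi> u n = prep (image_prefix \<phi> u k) (apply_inf \<phi> (shift k u)) n"
  proof (cases "n < length (image_prefix \<phi> u k)")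
    case True
    then show ?thesis
      by (simp add: prep_def apply_inf_nth_image_prefix[OF ne])
  next
    case False
    define i where "i = n - length (image_prefix \<phi> u k)"
    have blocks: "image_prefix \<phi> u (k + Suc i) = image_prefix \<phi> u k @ image_prefix \<phi> (shift k u) (Suc i)"
      by (rule image_prefix_add)
    have i: "i < length (image_prefix \<phi> (shift k u) (Suc i))"
      using length_image_prefix_ge[OF ne, of "Suc i" "shift k u"] by simp
    have "n < length (image_prefix \<phi> u (k + Suc i))"
      unfolding blocks using False i by (simp add: i_def)
    then have "apply_inf \<phi> u n = image_prefix \<phi> u (k + Suc i) ! n"
      by (rule apply_inf_nth_image_prefix[OF ne])
    also have "\<dots> = image_prefix \<phi> (shift k u) (Suc i) ! i"
      unfolding blocks using False by (simp add: nth_append i_def)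
    also have "\<dots> = apply_inf \<phi> (shift k u) i"
      using i by (simp add: apply_inf_nth_image_prefix[OF ne])
    finally show ?thesis
      using False by (simp add: prep_def i_def)
  qed
qed

lemma shift_apply_inf:
  "nonerasing \<phi> \<Longrightarrow> shift (length (image_prefix \<phi> u k)) (apply_inf \<phi> u) = apply_inf \<phi> (shift k u)"
  by (metis apply_inf_split shift_prep_length)

lemma apply_inf_prep:
  assumes ne: "nonerasing \<phi>"
  shows "apply_inf \<phi> (prep p x) = prep (concat (map \<phi> p)) (apply_inf \<phi> x)"
proof -
  have "map (prep p x) [0..<length p] = p"
    by (rule nth_equalityI) (simp_all add: prep_def)
  then have "image_prefix \<phi> (prep p x) (length p) = concat (map \<phi> p)"
    unfolding image_prefix_def by (metis map_map)
  then show ?thesis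
    using apply_inf_split[OF ne, of "prep p x" "length p"] by simp
qed

lemma apply_inf_shift_unfold:
  "nonerasing \<phi> \<Longrightarrow> apply_inf \<phi> (shift k u) = prep (\<phi> (u k)) (apply_inf \<phi> (shift (Suc k) u))"
  by (subst shift_unfold) (simp add: apply_inf_prep)

lemma apply_inf_agree:
  assumes ne: "nonerasing \<phi>" and "agree n u v"
  shows "agree n (apply_inf \<phi> u) (apply_inf \<phi> v)"
  unfolding agree_def
proof (intro allI impI)
  fix i assume "i < n"
  then have "i < length (image_prefix \<phi> u n)" "i < length (image_prefix \<phi> v n)"
    using length_image_prefix_ge[OF ne] by (meson less_le_trans)+
  then show "apply_inf \<phi> u i = apply_inf \<phi> v i"
    using image_prefix_cong[OF \<open>agree n u v\<close>, of \<phi>]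
    by (simp add: apply_inf_nth_image_prefix[OF ne, of i u n] apply_inf_nth_image_prefix[OF ne, of i v n])
qed

lemma shift_apply_inf_in_block:
  assumes ne: "nonerasing \<phi>" and r: "r \<le> length (\<phi> (u k))"
  shows "shift (length (image_prefix \<phi> u k) + r) (apply_inf \<phi> u)
    = prep (drop r (\<phi> (u k))) (apply_inf \<phi> (shift (Suc k) u))"
proof -
  have "shift (length (image_prefix \<phi> u k) + r) (apply_inf \<phi> u)
      = shift r (shift (length (image_prefix \<phi> u k)) (apply_inf \<phi> u))"
    by (simp add: shift_shift add.commute)
  also have "\<dots> = shift r (apply_inf \<phi> (shift k u))"
    by (simp only: shift_apply_inf[OF ne])
  also have "\<dots> = prep (drop r (\<phi> (u k))) (apply_inf \<phi> (shift (Suc k) u))"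
    using r by (subst apply_inf_shift_unfold[OF ne]) (simp add: shift_prep)
  finally show ?thesis .
qed

lemma position_in_block:
  assumes ne: "nonerasing \<phi>"
  obtains k r where "r < length (\<phi> (u k))" "j = length (image_prefix \<phi> u k) + r"
proof -
  have ex: "j < length (image_prefix \<phi> u (Suc j))"
    using length_image_prefix_ge[OF ne, of "Suc j" u] by simp
  define k where "k = (LEAST k. j < length (image_prefix \<phi> u (Suc k)))"
  have upper: "j < length (image_prefix \<phi> u (Suc k))"
    unfolding k_def by (rule LeastI[of _ j]) (rule ex)
  have lower: "length (image_prefix \<phi> u k) \<le> j"
  proof (cases k)
    case (Suc k')
    then have "\<not> j < length (image_prefix \<phi> u (Suc k'))"
      using not_less_Least[of k' "\<lambda>k. j < length (image_prefix \<phi> u (Suc k))"] k_def by simp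
    with Suc show ?thesis
      by simp
  qed simp
  from upper lower show ?thesis
    by (intro that[of "j - length (image_prefix \<phi> u k)" k]) (auto simp: image_prefix_Suc)
qed

lemma apply_inf_approx_blocks:
  assumes ne: "nonerasing \<phi>" and approx: "\<forall>n. \<exists>k. agree n (shift k u) c"
  shows "\<forall>n. \<exists>j. agree n (shift j (apply_inf \<phi> u)) (apply_inf \<phi> c)"
proof
  fix n
  obtain k where "agree n (shift k u) c"
    using approx by blast
  then have "agree n (apply_inf \<phi> (shift k u)) (apply_inf \<phi> c)"
    by (rule apply_inf_agree[OF ne])
  then show "\<exists>j. agree n (shift j (apply_inf \<phi> u)) (apply_inf \<phi> c)"
    unfolding shift_apply_inf[OF ne, of u k, symmetric] by blast
qed

lemma apply_inf_approx_after:
  assumes ne: "nonerasing \<phi>" and img: "\<phi> a = p @ b # q"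
    and approx: "\<forall>n. \<exists>k. u k = a \<and> agree n (shift (Suc k) u) c"
  shows "\<forall>n. \<exists>j. apply_inf \<phi> u j = b \<and> agree n (shift (Suc j) (apply_inf \<phi> u)) (prep q (apply_inf \<phi> c))"
proof
  fix n
  obtain k where k: "u k = a" "agree n (shift (Suc k) u) c"
    using approx by blast
  define j where "j = length (image_prefix \<phi> u k) + length p"
  have at_j: "shift j (apply_inf \<phi> u) = prep (b # q) (apply_inf \<phi> (shift (Suc k) u))"
    using shift_apply_inf_in_block[OF ne, of "length p" u k] k(1) img by (simp add: j_def)
  have "apply_inf \<phi> u j = b"
    using fun_cong[OF at_j, of 0] by (simp add: prep_def)
  moreover have "shift (Suc j) (apply_inf \<phi> u) = prep q (apply_inf \<phi> (shift (Suc k) u))"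
    using arg_cong[OF at_j, of "shift 1"] by (simp add: shift_shift shift_prep)
  moreover have "agree n (prep q (apply_inf \<phi> (shift (Suc k) u))) (prep q (apply_inf \<phi> c))"
    using agree_prep[OF apply_inf_agree[OF ne k(2)]] .
  ultimately show "\<exists>j. apply_inf \<phi> u j = b \<and> agree n (shift (Suc j) (apply_inf \<phi> u)) (prep q (apply_inf \<phi> c))"
    by auto
qed

lemma concat_map_concat:
  "concat (map \<phi> (concat (map \<psi> xs))) = concat (map (\<lambda>a. concat (map \<phi> (\<psi> a))) xs)"
  by (induction xs) auto

lemma nonerasing_comp: "nonerasing \<phi> \<Longrightarrow> nonerasing \<psi> \<Longrightarrow> nonerasing (\<lambda>a. concat (map \<phi> (\<psi> a)))"
  unfolding nonerasing_def by (metis concat.simps(2) list.exhaust list.simps(9) append_is_Nil_conv)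

lemma apply_inf_comp:
  assumes ne\<phi>: "nonerasing \<phi>" and ne\<psi>: "nonerasing \<psi>"
  shows "apply_inf \<phi> (apply_inf \<psi> u) = apply_inf (\<lambda>a. concat (map \<phi> (\<psi> a))) u"
proof
  fix n
  define \<chi> where "\<chi> = (\<lambda>a. concat (map \<phi> (\<psi> a)))"
  have ne\<chi>: "nonerasing \<chi>"
    unfolding \<chi>_def using nonerasing_comp[OF ne\<phi> ne\<psi>] .
  define P where "P = image_prefix \<psi> u (Suc n)"
  have "map (apply_inf \<psi> u) [0..<length P] = P"
    by (rule nth_equalityI) (simp_all add: P_def apply_inf_nth_image_prefix[OF ne\<psi>])
  then have P: "image_prefix \<phi> (apply_inf \<psi> u) (length P) = image_prefix \<chi> u (Suc n)"
    unfolding image_prefix_def P_def \<chi>_def by (metis concat_map_concat map_map)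
  have n: "n < length (image_prefix \<chi> u (Suc n))"
    using length_image_prefix_ge[OF ne\<chi>, of "Suc n" u] by simp
  have "apply_inf \<phi> (apply_inf \<psi> u) n = image_prefix \<phi> (apply_inf \<psi> u) (length P) ! n"
    using n P apply_inf_nth_image_prefix[OF ne\<phi>, of n "apply_inf \<psi> u" "length P"] by simp
  also have "\<dots> = apply_inf \<chi> u n"
    using n P by (simp add: apply_inf_nth_image_prefix[OF ne\<chi>])
  finally show "apply_inf \<phi> (apply_inf \<psi> u) n = apply_inf (\<lambda>a. concat (map \<phi> (\<psi> a))) u n"
    by (simp add: \<chi>_def)
qed

section \<open>The substitutions L, M and R\<close>

lemma img_nonerasing: "nonerasing (img X)"
  unfolding nonerasing_def by (intro allI, cases X; case_tac a) auto

lemma morph_nonerasing: "nonerasing (morph \<sigma>)"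
proof (induction \<sigma>)
  case (Cons X \<sigma>)
  have "nonerasing (\<lambda>a. concat (map (img X) (morph \<sigma> a)))"
    by (rule nonerasing_comp[OF img_nonerasing Cons.IH])
  then show ?case
    by simp
qed (simp add: nonerasing_def)

lemma morph_append: "morph (\<sigma> @ \<tau>) a = concat (map (morph \<sigma>) (morph \<tau> a))"
  by (induction \<sigma>) (simp_all add: concat_map_concat)

lemma subst_Nil: "subst [] u = u"
proof
  fix n
  have "concat (map (\<lambda>i. [u i]) [0..<Suc n]) = map u [0..<Suc n]"
    by simp
  then show "subst [] u n = u n"
    unfolding subst_def apply_inf_def by (simp add: comp_def del: upt_Suc)
qed

lemma subst_append: "subst (\<sigma> @ \<tau>) u = subst \<sigma> (subst \<tau> u)"
proof -
  have "morph (\<sigma> @ \<tau>) = (\<lambda>a. concat (map (morph \<sigma>) (morph \<tau> a)))"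
    by (rule ext) (rule morph_append)
  then show ?thesis
    unfolding subst_def by (simp add: apply_inf_comp[OF morph_nonerasing morph_nonerasing])
qed

lemma subst_prep: "subst \<sigma> (prep p x) = prep (concat (map (morph \<sigma>) p)) (subst \<sigma> x)"
  unfolding subst_def by (rule apply_inf_prep[OF morph_nonerasing])

abbreviation apply_sub :: "sub \<Rightarrow> iword \<Rightarrow> iword" where
  "apply_sub X \<equiv> apply_inf (img X)"

lemma subst_single: "subst [X] = apply_sub X"
proof -
  have "morph [X] = img X"
    by (rule ext) simp
  then show ?thesis
    by (intro ext) (simp only: subst_def)
qed

lemma subst_snoc: "subst (\<sigma> @ [X]) u = subst \<sigma> (apply_sub X u)"
  by (simp add: subst_append subst_single)

lemma morph_snoc: "morph (\<sigma> @ [X]) a = concat (map (morph \<sigma>) (img X a))"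
  by (simp add: morph_append)

lemma apply_sub_prep: "apply_sub X (prep p x) = prep (concat (map (img X) p)) (apply_sub X x)"
  by (rule apply_inf_prep[OF img_nonerasing])

lemma apply_sub_0: "apply_sub X u 0 = hd (img X (u 0))"
  using fun_cong[OF apply_inf_split[OF img_nonerasing, of X u 1], of 0]
  by (cases X; cases "u 0") (simp_all add: image_prefix_def prep_def)

lemma shift_apply_sub_cases:
  obtains (block) k where "shift j (apply_sub X u) = apply_sub X (shift k u)"
  | (inner) k a b where "img X (u k) = [a, b]"
      "shift j (apply_sub X u) = prep [b] (apply_sub X (shift (Suc k) u))"
proof -
  obtain k r where r: "r < length (img X (u k))" and j: "j = length (image_prefix (img X) u k) + r"
    by (rule position_in_block[OF img_nonerasing])
  have at_j: "shift j (apply_sub X u) = prep (drop r (img X (u k))) (apply_sub X (shift (Suc k) u))"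
    using shift_apply_inf_in_block[OF img_nonerasing, of r X u k] r j by simp
  have "length (img X (u k)) \<le> 2"
    by (cases X; cases "u k") auto
  with r consider "r = 0" | "r = 1" "length (img X (u k)) = 2"
    by linarith
  then show ?thesis
  proof cases
    case 1
    with at_j show ?thesis
      by (intro block[of k]) (simp add: apply_inf_shift_unfold[OF img_nonerasing, of X k u])
  next
    case 2
    then obtain a b where "img X (u k) = [a, b]"
      by (cases X; cases "u k") auto
    with at_j 2 show ?thesis
      by (intro inner) simp_all
  qed
qed

lemma apply_sub_zero: "apply_sub SL (\<lambda>_. False) = (\<lambda>_. False)"
proof
  fix n
  have "concat (map (img SL \<circ> (\<lambda>_. False)) xs) = map (\<lambda>_. False) xs" for xs :: "nat list"
    by (induction xs) auto
  then show "apply_sub SL (\<lambda>_. False) n = False"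
    unfolding apply_inf_def by (simp del: upt_Suc)
qed

lemma apply_sub_mono:
  assumes "lex_le x y"
  shows "lex_le (apply_sub X x) (apply_sub X y)"
proof (cases "x = y")
  case False
  with assms obtain n where n: "agree n x y" "\<not> x n" "y n"
    by (auto simp: lex_le_def lex_less_def agree_def)
  let ?x' = "apply_sub X (shift (Suc n) x)" and ?y' = "apply_sub X (shift (Suc n) y)"
  have x: "apply_sub X x = prep (image_prefix (img X) x n) (prep (img X False) ?x')"
    using apply_inf_split[OF img_nonerasing, of X x n] apply_inf_shift_unfold[OF img_nonerasing, of X n x] n(2)
    by simp
  have y: "apply_sub X y = prep (image_prefix (img X) x n) (prep (img X True) ?y')"
    using apply_inf_split[OF img_nonerasing, of X y n] apply_inf_shift_unfold[OF img_nonerasing, of X n y] n(3)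
      image_prefix_cong[OF n(1)] by simp
  have "lex_less (prep (img X False) ?x') (prep (img X True) ?y')"
  proof (cases X)
    case SL
    have "\<not> ?x' 0"
      using SL by (cases "x (Suc n)") (simp_all add: apply_sub_0)
    then have "lex_less ?x' (prep [True] ?y')"
      by (rule lex_less_first) (simp add: prep_def)
    then show ?thesis
      using SL prep_append[of "[False]" "[True]" ?y'] by simp
  qed (simp_all add: lex_less_first prep_def)
  then show ?thesis
    unfolding x y by (simp add: lex_le_def)
qed (simp add: lex_le_refl)

section \<open>One substitution\<close>

lemma apply_sub_winf_le_shift:
  assumes "X \<noteq> SM"
  shows "lex_le (apply_sub X (winf u)) (shift j (apply_sub X u))"
proof (cases rule: shift_apply_sub_cases[of j X u])
  case (block k)
  then show ?thesis
    using apply_sub_mono[OF winf_le_shift] by simp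
next
  case (inner k a b)
  have "\<not> winf u 0" if "\<not> u k"
    using lex_le_first_False[OF winf_le_shift[of u k]] that by simp
  with inner assms have "b" "\<not> apply_sub X (winf u) 0"
    by (cases X; cases "u k"; cases "winf u 0"; simp add: apply_sub_0)+
  with inner show ?thesis
    by (intro lex_le_first) (simp_all add: prep_def)
qed

lemma winf_apply_sub_LR: "X \<noteq> SM \<Longrightarrow> winf (apply_sub X u) = apply_sub X (winf u)"
  using apply_sub_winf_le_shift apply_inf_approx_blocks[OF img_nonerasing] winf_approx
  by (intro winf_eqI) auto

lemma apply_sub_M_winf_le_shift:
  assumes "winf u = winf1 u"
  shows "lex_le (prep [False] (apply_sub SM (winf u))) (shift j (apply_sub SM u))"
proof (cases rule: shift_apply_sub_cases[of j SM u])
  case (block k)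
  then show ?thesis
    using lex_le_prep_False apply_sub_mono[OF winf_le_shift] lex_le_trans by metis
next
  case (inner k a b)
  show ?thesis
  proof (cases "u k")
    case True
    with inner have "shift j (apply_sub SM u) = prep [False] (apply_sub SM (shift (Suc k) u))"
      by simp
    with True assms show ?thesis
      using apply_sub_mono[OF winf1_le_shift] by simp
  next
    case False
    with inner show ?thesis
      by (intro lex_le_first) (simp_all add: prep_def)
  qed
qed

fun one_tail :: "sub \<Rightarrow> bool list" where
  "one_tail SM = [False]"
| "one_tail _ = []"

lemma img_True_split: "\<exists>p. img X True = p @ True # one_tail X"
  by (cases X) auto

lemma winf_apply_sub:
  assumes "winf u = winf1 u"
  shows "winf1 (apply_sub X u) = winf (apply_sub X u)
    \<and> winf (apply_sub X u) = prep (one_tail X) (apply_sub X (winf u))"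
proof -
  obtain p where "img X True = p @ True # one_tail X"
    using img_True_split by blast
  from apply_inf_approx_after[OF img_nonerasing this] winf1_approx[OF assms]
  have "\<forall>n. \<exists>j. apply_sub X u j \<and>
      agree n (shift (Suc j) (apply_sub X u)) (prep (one_tail X) (apply_sub X (winf u)))"
    by simp
  moreover have "\<forall>j. lex_le (prep (one_tail X) (apply_sub X (winf u))) (shift j (apply_sub X u))"
    using apply_sub_winf_le_shift apply_sub_M_winf_le_shift[OF assms] by (cases X) auto
  ultimately show ?thesis
    using winf1_winf_eqI by metis
qed

lemma shift_apply_sub_le_wsup: "lex_le (shift j (apply_sub X u)) (prep [True] (apply_sub X (wsup u)))"
proof (cases rule: shift_apply_sub_cases[of j X u])
  case (block k)
  then show ?thesis
    using lex_le_prep_True apply_sub_mono[OF shift_le_wsup] lex_le_trans by metis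
next
  case (inner k a b)
  show ?thesis
  proof (cases b)
    case True
    with inner show ?thesis
      using apply_sub_mono[OF shift_le_wsup] by simp
  next
    case False
    with inner show ?thesis
      by (intro lex_le_first) (simp_all add: prep_def)
  qed
qed

lemma wsup_apply_sub_MR:
  assumes "X \<noteq> SL" "wsup u = wsup0 u"
  shows "wsup0 (apply_sub X u) = wsup (apply_sub X u)
    \<and> wsup (apply_sub X u) = prep [True] (apply_sub X (wsup u))"
proof -
  have "img X False = [] @ False # [True]"
    using assms(1) by (cases X) auto
  from apply_inf_approx_after[OF img_nonerasing this] wsup0_approx[OF assms(2)]
  have "\<forall>n. \<exists>j. \<not> apply_sub X u j \<and>
      agree n (shift (Suc j) (apply_sub X u)) (prep [True] (apply_sub X (wsup u)))"
    by simp
  then show ?thesis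
    using wsup0_wsup_eqI shift_apply_sub_le_wsup by metis
qed

lemma shift_apply_L_le_wsup:
  assumes "wsup u 0"
  shows "lex_le (shift j (apply_sub SL u)) (prep [True] (apply_sub SL (shift 1 (wsup u))))"
proof (cases rule: shift_apply_sub_cases[of j SL u])
  case (block k)
  then show ?thesis
    by (cases "u k") (simp_all add: lex_le_first apply_sub_0 prep_def)
next
  case (inner k a b)
  then have "u k" "shift j (apply_sub SL u) = prep [True] (apply_sub SL (shift (Suc k) u))"
    by (cases "u k"; simp)+
  moreover have "lex_le (prep [True] (shift (Suc k) u)) (prep [True] (shift 1 (wsup u)))"
    using shift_le_wsup[of k u] shift_unfold[of k u] shift_unfold[of 0 "wsup u"] assms \<open>u k\<close> by simp
  ultimately show ?thesis
    using apply_sub_mono by simp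
qed

(* No hypothesis on u is needed: every 1 in L(u) is preceded by a 0. *)
lemma wsup_apply_L: "wsup0 (apply_sub SL u) = wsup (apply_sub SL u)
  \<and> prep [False] (wsup (apply_sub SL u)) = apply_sub SL (wsup u)"
proof (cases "wsup u 0")
  case False
  then have "u = (\<lambda>_. False)"
    using lex_le_first_False[OF shift_le_wsup] by fastforce
  moreover have "prep [False] (\<lambda>_. False) = (\<lambda>_. False)"
    by (simp add: prep_def fun_eq_iff)
  ultimately show ?thesis
    using wsup0_wsup_zero by (simp add: apply_sub_zero)
next
  case True
  define M where "M = shift 1 (wsup u)"
  have M: "wsup u = prep [True] M"
    using shift_unfold[of 0 "wsup u"] True by (simp add: M_def)
  define c where "c = prep [True] (apply_sub SL M)"
  have "\<forall>n. \<exists>k. u k = True \<and> agree n (shift (Suc k) u) M"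
    using wsup_approx agree_SucD True unfolding M_def
    by (metis shift_apply shift_shift add_0 plus_1_eq_Suc)
  from apply_inf_approx_after[of "img SL" True "[]" False "[True]", OF img_nonerasing _ this]
  have "\<forall>n. \<exists>j. \<not> apply_sub SL u j \<and> agree n (shift (Suc j) (apply_sub SL u)) c"
    by (simp add: c_def)
  then have "wsup0 (apply_sub SL u) = c \<and> wsup (apply_sub SL u) = c"
    using wsup0_wsup_eqI shift_apply_L_le_wsup[OF True] unfolding c_def M_def by metis
  moreover have "apply_sub SL (wsup u) = prep [False] c"
    unfolding M by (simp add: c_def apply_sub_prep prep_append[symmetric])
  ultimately show ?thesis
    by simp
qed

section \<open>Compositions of substitutions\<close>

lemma winf_subst:
  "\<exists>w. suffix w (morph \<sigma> True) \<and>
     (\<forall>u. winf u = winf1 u \<longrightarrow>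
        winf1 (subst \<sigma> u) = winf (subst \<sigma> u) \<and> winf (subst \<sigma> u) = prep w (subst \<sigma> (winf u)))"
proof (induction \<sigma> rule: rev_induct)
  case Nil
  show ?case
    by (intro exI[of _ "[]"]) (simp add: subst_Nil)
next
  case (snoc X \<tau>)
  then obtain w where w: "suffix w (morph \<tau> True)"
    and IH: "\<And>v. winf v = winf1 v \<Longrightarrow>
      winf1 (subst \<tau> v) = winf (subst \<tau> v) \<and> winf (subst \<tau> v) = prep w (subst \<tau> (winf v))"
    by blast
  define t where "t = concat (map (morph \<tau>) (one_tail X))"
  obtain p where p: "img X True = p @ True # one_tail X"
    using img_True_split by blast
  have "suffix (w @ t) (morph (\<tau> @ [X]) True)"
    using w unfolding morph_snoc p t_def by (auto intro: suffix_appendI)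
  moreover have "winf1 (subst (\<tau> @ [X]) u) = winf (subst (\<tau> @ [X]) u)
      \<and> winf (subst (\<tau> @ [X]) u) = prep (w @ t) (subst (\<tau> @ [X]) (winf u))"
    if "winf u = winf1 u" for u
  proof -
    have X: "winf (apply_sub X u) = winf1 (apply_sub X u)"
      "winf (apply_sub X u) = prep (one_tail X) (apply_sub X (winf u))"
      using winf_apply_sub[OF that] by auto
    show ?thesis
      using IH[OF X(1)] unfolding X(2) by (simp add: subst_snoc subst_prep prep_append t_def)
  qed
  ultimately show ?case
    by blast
qed

(* The prefix condition is what (b) needs: for X in {M, R}, morph (tau @ [X]) False is
   morph tau False @ morph tau True. *)
lemma wsup_subst_prefix:
  "\<exists>w. prefix w (morph \<tau> False @ morph \<tau> True) \<and>
     (\<forall>v. wsup v = wsup0 v \<longrightarrow> wsup0 (subst \<tau> v) = wsup (subst \<tau> v)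
        \<and> prep w (wsup (subst \<tau> v)) = subst \<tau> (prep [False] (wsup v)))"
proof (induction \<tau> rule: rev_induct)
  case Nil
  show ?case
    by (intro exI[of _ "[False]"]) (simp add: subst_Nil)
next
  case (snoc Y \<tau>)
  then obtain w where w: "prefix w (morph \<tau> False @ morph \<tau> True)"
    and IH: "\<And>v. wsup v = wsup0 v \<Longrightarrow> wsup0 (subst \<tau> v) = wsup (subst \<tau> v)
      \<and> prep w (wsup (subst \<tau> v)) = subst \<tau> (prep [False] (wsup v))"
    by blast
  show ?case
  proof (cases "Y = SL")
    case False
    then have Y0: "img Y False = [False, True]"
      by (cases Y) auto
    have "prefix w ((morph \<tau> False @ morph \<tau> True) @ morph (\<tau> @ [Y]) True)"
      using w by (rule prefix_prefix)
    then have "prefix w (morph (\<tau> @ [Y]) False @ morph (\<tau> @ [Y]) True)"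
      by (simp add: morph_snoc Y0)
    moreover have "wsup0 (subst (\<tau> @ [Y]) v) = wsup (subst (\<tau> @ [Y]) v)
        \<and> prep w (wsup (subst (\<tau> @ [Y]) v)) = subst (\<tau> @ [Y]) (prep [False] (wsup v))"
      if "wsup v = wsup0 v" for v
      using IH wsup_apply_sub_MR[OF False that]
      by (simp add: subst_snoc apply_sub_prep Y0 prep_append[symmetric])
    ultimately show ?thesis
      by blast
  next
    case True
    have "prefix (morph \<tau> False @ w) (morph (\<tau> @ [Y]) False @ morph (\<tau> @ [Y]) True)"
      using w True by (simp add: morph_snoc)
    moreover have "wsup0 (subst (\<tau> @ [Y]) v) = wsup (subst (\<tau> @ [Y]) v)
        \<and> prep (morph \<tau> False @ w) (wsup (subst (\<tau> @ [Y]) v)) = subst (\<tau> @ [Y]) (prep [False] (wsup v))"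
      if "wsup v = wsup0 v" for v
    proof -
      have L: "wsup (apply_sub SL v) = wsup0 (apply_sub SL v)"
        "apply_sub SL (wsup v) = prep [False] (wsup (apply_sub SL v))"
        using wsup_apply_L[of v] by auto
      show ?thesis
        using True IH[OF L(1)]
        by (simp add: subst_snoc apply_sub_prep L(2) subst_prep prep_append morph_snoc)
    qed
    ultimately show ?thesis
      by blast
  qed
qed

lemma wsup_subst_MR:
  assumes "\<sigma> \<noteq> []" "last \<sigma> \<in> {SM, SR}"
  shows "\<exists>w. suffix w (morph \<sigma> False) \<and>
    (\<forall>u. wsup u = wsup0 u \<longrightarrow>
       wsup0 (subst \<sigma> u) = wsup (subst \<sigma> u) \<and> wsup (subst \<sigma> u) = prep w (subst \<sigma> (wsup u)))"
proof -
  obtain \<tau> X where \<sigma>: "\<sigma> = \<tau> @ [X]" and X: "X \<noteq> SL"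
    using assms by (metis append_butlast_last_id empty_iff insert_iff sub.distinct(1,3))
  then have X0: "img X False = [False, True]"
    by (cases X) auto
  obtain w where w: "prefix w (morph \<tau> False @ morph \<tau> True)"
    and IH: "\<And>v. wsup v = wsup0 v \<Longrightarrow> wsup0 (subst \<tau> v) = wsup (subst \<tau> v)
      \<and> prep w (wsup (subst \<tau> v)) = subst \<tau> (prep [False] (wsup v))"
    using wsup_subst_prefix by blast
  obtain w' where w': "morph \<sigma> False = w @ w'"
    using w by (auto simp: \<sigma> morph_snoc X0 prefix_def)
  have "wsup0 (subst \<sigma> u) = wsup (subst \<sigma> u) \<and> wsup (subst \<sigma> u) = prep w' (subst \<sigma> (wsup u))"
    if "wsup u = wsup0 u" for u
  proof -
    have X_sup: "wsup (apply_sub X u) = wsup0 (apply_sub X u)"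
      "wsup (apply_sub X u) = prep [True] (apply_sub X (wsup u))"
      using wsup_apply_sub_MR[OF X that] by auto
    have "prep w (wsup (subst \<sigma> u)) = prep (morph \<sigma> False) (subst \<sigma> (wsup u))"
      using IH[OF X_sup(1)] unfolding X_sup(2)
      by (simp add: \<sigma> subst_snoc subst_prep apply_sub_prep X0 morph_snoc prep_append[symmetric])
    then have "wsup (subst \<sigma> u) = prep w' (subst \<sigma> (wsup u))"
      unfolding w' prep_append by (rule prep_inj)
    with IH[OF X_sup(1)] show ?thesis
      by (simp add: \<sigma> subst_snoc)
  qed
  moreover have "suffix w' (morph \<sigma> False)"
    using w' by (simp add: suffix_def)
  ultimately show ?thesis
    by blast
qed

lemma wsup_subst_L:
  assumes "\<sigma> \<noteq> []" "last \<sigma> = SL"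
  shows "\<exists>w. (\<forall>i<length w. w ! i = subst \<sigma> (\<lambda>_. False) i) \<and>
    (\<forall>u. wsup u = wsup0 u \<longrightarrow>
       prep w (wsup0 (subst \<sigma> u)) = prep w (wsup (subst \<sigma> u))
     \<and> prep w (wsup (subst \<sigma> u)) = subst \<sigma> (wsup u))"
proof -
  obtain \<tau> where \<sigma>: "\<sigma> = \<tau> @ [SL]"
    using assms by (metis append_butlast_last_id)
  obtain w where IH: "\<And>v. wsup v = wsup0 v \<Longrightarrow> wsup0 (subst \<tau> v) = wsup (subst \<tau> v)
      \<and> prep w (wsup (subst \<tau> v)) = subst \<tau> (prep [False] (wsup v))"
    using wsup_subst_prefix by blast
  have sup: "wsup0 (subst \<sigma> u) = wsup (subst \<sigma> u) \<and> prep w (wsup (subst \<sigma> u)) = subst \<sigma> (wsup u)"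
    if "wsup u = wsup0 u" for u
    using IH[of "apply_sub SL u"] wsup_apply_L[of u] by (simp add: \<sigma> subst_snoc)
  \<comment> \<open>w is a prefix of sigma(0^omega), since u = 0^omega satisfies the hypothesis.\<close>
  have "prep w (wsup (subst \<sigma> (\<lambda>_. False))) = subst \<sigma> (\<lambda>_. False)"
    using sup[of "\<lambda>_. False"] wsup0_wsup_zero by simp
  then have "\<forall>i<length w. w ! i = subst \<sigma> (\<lambda>_. False) i"
    by (metis prep_def)
  with sup show ?thesis
    by auto
qed

theorem lemma2p3:
  shows "(\<forall>u. winf (subst [SL] u) = subst [SL] (winf u))
    \<and> (\<forall>u. winf (subst [SR] u) = subst [SR] (winf u))
    \<and> (\<forall>u. prep [False] (wsup (subst [SL] u)) = subst [SL] (wsup u))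
    \<and> (\<forall>u. winf u = winf1 u \<longrightarrow> winf (subst [SM] u) = prep [False] (subst [SM] (winf u)))
    \<and> (\<forall>u. wsup u = wsup0 u \<longrightarrow>
          wsup (subst [SR] u) = prep [True] (subst [SR] (wsup u))
        \<and> wsup (subst [SM] u) = prep [True] (subst [SM] (wsup u)))
    \<and> (\<forall>\<sigma>. \<exists>w. suffix w (morph \<sigma> True) \<and>
          (\<forall>u. winf u = winf1 u \<longrightarrow>
             winf1 (subst \<sigma> u) = winf (subst \<sigma> u)
           \<and> winf (subst \<sigma> u) = prep w (subst \<sigma> (winf u))))
    \<and> (\<forall>\<sigma>. \<sigma> \<noteq> [] \<and> last \<sigma> \<in> {SM, SR} \<longrightarrow>
          (\<exists>w. suffix w (morph \<sigma> False) \<and>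
            (\<forall>u. wsup u = wsup0 u \<longrightarrow>
               wsup0 (subst \<sigma> u) = wsup (subst \<sigma> u)
             \<and> wsup (subst \<sigma> u) = prep w (subst \<sigma> (wsup u)))))
    \<and> (\<forall>\<sigma>. \<sigma> \<noteq> [] \<and> last \<sigma> = SL \<longrightarrow>
          (\<exists>w. (\<forall>i<length w. w ! i = subst \<sigma> (\<lambda>_. False) i) \<and>
            (\<forall>u. wsup u = wsup0 u \<longrightarrow>
               prep w (wsup0 (subst \<sigma> u)) = prep w (wsup (subst \<sigma> u))
             \<and> prep w (wsup (subst \<sigma> u)) = subst \<sigma> (wsup u))))"
  using winf_apply_sub_LR winf_apply_sub[where X = SM] wsup_apply_L wsup_apply_sub_MR
    winf_subst wsup_subst_MR wsup_subst_L
  by (simp add: subst_single)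

end
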